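(* Let $L\geq 1$ be an integer, $P\geq 0$, and $p_B\in[0,1]$. Let $\beta_1,\ldots,\beta_L$ be i.i.d. random variables with $\mathbb{P}(\beta_l=0)=p_B$, $\mathbb{P}(\beta_l=1)=1-p_B$, and let $\theta_1,\ldots,\theta_L$ be i.i.d. $\mathrm{Uniform}(0,2\pi)$ random variables independent of $\boldsymbol{\beta}=(\beta_1,\ldots,\beta_L)$. Set $h_l=\beta_l e^{j\theta_l}$, $\mathbf{h}=[h_1,\ldots,h_L]^{\mathsf T}$, and $\alpha=\sum_{l=1}^L\beta_l$ (so $\alpha\sim\mathrm{Binomial}(L,1-p_B)$). Let $\mathcal{Q}$ be the set of functions $\mathbf{Q}$ mapping each $\mathbf{b}\in\{0,1\}^L$ to a complex Hermitian positive semidefinite $L\times L$ matrix $\mathbf{Q}(\mathbf{b})$ with $[\mathbf{Q}(\mathbf{b})]_{l,l}\leq P$ for all $l\in\{1,\ldots,L\}$. Then $$\sup_{\mathbf{Q}\in\mathcal{Q}}\mathbb{E}\big[\log(1+\mathbf{h}^{\mathsf H}\mathbf{Q}(\boldsymbol{\beta})\mathbf{h})\big]=\mathbb{E}[\log(1+\alpha P)].$$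
   Context: This quantity is the ergodic capacity of a multi-point intermittent block fading channel $y=\sum_{l}h_l x_l+z$ with unit-variance complex Gaussian noise, perfect channel knowledge at the receiver, knowledge of the blockage state $\boldsymbol{\beta}$ at the transmitters, and per-transmitter power constraint $P$. Here $\beta_l$ has the stationary distribution of a binary Markov blockage chain, with $p_B$ the blockage probability. $\log$ is the logarithm in a fixed base (e.g. base 2); $\mathbf{h}^{\mathsf H}$ is the conjugate transpose. *)

theory Defs
  imports "HOL-Probability.Probability"
begin

text \<open>L x L complex matrices are represented as functions nat => nat => complex,
  only the entries with indices below L being relevant.\<close>

definition hermitian_mat :: "nat \<Rightarrow> (nat \<Rightarrow> nat \<Rightarrow> complex) \<Rightarrow> bool" where
  "hermitian_mat L A \<longleftrightarrow> (\<forall>i<L. \<forall>k<L. A k i = cnj (A i k))"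

definition quad_form :: "nat \<Rightarrow> (nat \<Rightarrow> nat \<Rightarrow> complex) \<Rightarrow> (nat \<Rightarrow> complex) \<Rightarrow> complex" where
  "quad_form L A v = (\<Sum>i<L. \<Sum>k<L. cnj (v i) * A i k * v k)"

definition psd_mat :: "nat \<Rightarrow> (nat \<Rightarrow> nat \<Rightarrow> complex) \<Rightarrow> bool" where
  "psd_mat L A \<longleftrightarrow> hermitian_mat L A \<and> (\<forall>v. Re (quad_form L A v) \<ge> 0)"

text \<open>The admissible policies: maps from blockage states b in {0,1}^L (encoded as
  extensional bool vectors) to Hermitian PSD matrices with diagonal entries at most P.\<close>
definition admissible_Q :: "nat \<Rightarrow> real \<Rightarrow> ((nat \<Rightarrow> bool) \<Rightarrow> nat \<Rightarrow> nat \<Rightarrow> complex) set" where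
  "admissible_Q L P = {Q. \<forall>b \<in> PiE {..<L} (\<lambda>_. UNIV).
      psd_mat L (Q b) \<and> (\<forall>l<L. Re (Q b l l) \<le> P)}"

definition channel_space :: "nat \<Rightarrow> real \<Rightarrow> ((nat \<Rightarrow> bool) \<times> (nat \<Rightarrow> real)) measure" where
  "channel_space L pB =
     (PiM {..<L} (\<lambda>_. measure_pmf (bernoulli_pmf (1 - pB))))
       \<Otimes>\<^sub>M (PiM {..<L} (\<lambda>_. uniform_measure lborel {0..2*pi}))"

definition chan_h :: "(nat \<Rightarrow> bool) \<Rightarrow> (nat \<Rightarrow> real) \<Rightarrow> nat \<Rightarrow> complex" where
  "chan_h b \<theta> l = of_bool (b l) * cis (\<theta> l)"

end

theory Submission
  imports Defs
begin

(* Fix a blockage state b and put a = |b| P.  By concavity of the logarithm,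
   log (1 + q) <= log (1 + a) + (q - a) / ((1 + a) ln c).  The quadratic form q = h^H Q(b) h
   splits into its diagonal, which is at most a by the per-antenna power constraint, and the
   cross terms conj h_i Q(b)_ik h_k with i <> k.  Each cross term is a function of b times
   conj (cis theta_i) * cis theta_k, whose mean vanishes because the phases are independent and
   uniform.  Taking expectations, no policy beats E log (1 + alpha P), and Q(b) = P I attains it. *)

lemma integral_uniform_measure_atLeastAtMost:
  fixes f F :: "real \<Rightarrow> 'a::euclidean_space"
  assumes "a < b" and f_borel: "f \<in> borel_measurable borel"
    and F: "\<And>x. a \<le> x \<Longrightarrow> x \<le> b \<Longrightarrow> (F has_vector_derivative f x) (at x within {a..b})"
    and f: "continuous_on {a..b} f"
  shows "integral\<^sup>L (uniform_measure lborel {a..b}) f = (F b - F a) /\<^sub>R (b - a)"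
proof -
  have dens: "uniform_measure lborel {a..b} = density lborel (\<lambda>x. ennreal (indicator {a..b} x / (b - a)))"
    unfolding uniform_measure_def using \<open>a < b\<close>
    by (intro density_cong) (auto simp: divide_ennreal[symmetric] split: split_indicator)
  have "integral\<^sup>L (uniform_measure lborel {a..b}) f
      = (\<integral>x. (indicator {a..b} x / (b - a)) *\<^sub>R f x \<partial>lborel)"
    unfolding dens using \<open>a < b\<close> by (intro integral_density) (auto simp: f_borel)
  also have "\<dots> = (\<integral>x. indicator {a..b} x *\<^sub>R f x \<partial>lborel) /\<^sub>R (b - a)"
    by (simp add: divide_inverse_commute flip: scaleR_scaleR)
  finally show ?thesis
    using integral_FTC_atLeastAtMost[OF less_imp_le[OF \<open>a < b\<close>] F f] by simp
qed

abbreviation phase_measure :: "real measure" where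
  "phase_measure \<equiv> uniform_measure lborel {0..2*pi}"

lemma prob_space_phase_measure: "prob_space phase_measure"
  by (rule prob_space_uniform_measure) auto

lemma borel_measurable_cis: "cis \<in> borel_measurable borel"
  by (intro borel_measurable_continuous_onI continuous_intros)

lemma borel_measurable_phase_measure_iff: "f \<in> borel_measurable phase_measure \<longleftrightarrow> f \<in> borel_measurable borel"
  by (metis measurable_cong_sets sets_lborel sets_uniform_measure)

lemma integrable_cis_phase_measure: "integrable phase_measure cis"
proof -
  interpret prob_space phase_measure by (rule prob_space_phase_measure)
  show ?thesis
    by (rule integrable_const_bound[where B=1])
      (auto simp: borel_measurable_phase_measure_iff borel_measurable_cis)
qed

lemma integral_cis_phase_measure: "integral\<^sup>L phase_measure cis = 0"
proof -
  have "((\<lambda>x. - \<i> * cis x) has_vector_derivative cis x) (at x within A)" for x A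
    unfolding has_vector_derivative_def
    by (auto intro!: derivative_eq_intros simp: algebra_simps)
  then have "integral\<^sup>L phase_measure cis = (- \<i> * cis (2*pi) - - \<i> * cis 0) /\<^sub>R (2*pi - 0)"
    by (intro integral_uniform_measure_atLeastAtMost continuous_intros borel_measurable_cis) auto
  then show ?thesis by simp
qed

lemma
  assumes "finite I" "i \<in> I" "k \<in> I" "i \<noteq> k"
  shows integrable_cnj_cis_mult_cis_PiM:
      "integrable (PiM I (\<lambda>_. phase_measure)) (\<lambda>\<theta>. cnj (cis (\<theta> i)) * cis (\<theta> k))"
    and integral_cnj_cis_mult_cis_PiM:
      "(\<integral>\<theta>. cnj (cis (\<theta> i)) * cis (\<theta> k) \<partial>PiM I (\<lambda>_. phase_measure)) = 0"
proof -
  interpret phase: prob_space phase_measure by (rule prob_space_phase_measure)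
  interpret product_prob_space "\<lambda>_. phase_measure" I
    by (intro product_prob_space.intro product_sigma_finite.intro product_prob_space_axioms.intro)
      (auto intro: phase.sigma_finite_measure_axioms prob_space_phase_measure)
  define f where "f j x = (if j = i then cnj (cis x) else 1) * (if j = k then cis x else 1)" for j x
  have prod_f: "(\<Prod>j\<in>I. f j (\<theta> j)) = cnj (cis (\<theta> i)) * cis (\<theta> k)" for \<theta>
    using assms by (simp add: f_def prod.distrib)
  have f_int: "integrable phase_measure (f j)" for j
    using integrable_cis_phase_measure \<open>i \<noteq> k\<close> by (cases "j = i"; cases "j = k") (simp_all add: f_def[abs_def])
  show "integrable (PiM I (\<lambda>_. phase_measure)) (\<lambda>\<theta>. cnj (cis (\<theta> i)) * cis (\<theta> k))"
    using product_integrable_prod[of I f] f_int assms by (simp add: prod_f)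
  have "(\<integral>\<theta>. cnj (cis (\<theta> i)) * cis (\<theta> k) \<partial>PiM I (\<lambda>_. phase_measure))
      = (\<Prod>j\<in>I. integral\<^sup>L phase_measure (f j))"
    using product_integral_prod[of I f] f_int assms by (simp add: prod_f)
  also have "\<dots> = 0"
  proof (intro prod_zero bexI[of _ i])
    have "f i = (\<lambda>x. cnj (cis x))"
      using \<open>i \<noteq> k\<close> by (simp add: f_def fun_eq_iff)
    then show "integral\<^sup>L phase_measure (f i) = 0"
      by (simp add: integral_cis_phase_measure)
  qed (use assms in auto)
  finally show "(\<integral>\<theta>. cnj (cis (\<theta> i)) * cis (\<theta> k) \<partial>PiM I (\<lambda>_. phase_measure)) = 0" .
qed

lemma (in pair_sigma_finite)
  fixes f :: "'a \<Rightarrow> 'c::{real_normed_field, banach, second_countable_topology}"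
  assumes f: "integrable M1 f" and g: "integrable M2 g"
  shows integrable_mult_fst_snd: "integrable (M1 \<Otimes>\<^sub>M M2) (\<lambda>x. f (fst x) * g (snd x))"
    and integral_mult_fst_snd:
      "(\<integral>x. f (fst x) * g (snd x) \<partial>(M1 \<Otimes>\<^sub>M M2)) = integral\<^sup>L M1 f * integral\<^sup>L M2 g"
proof -
  show int: "integrable (M1 \<Otimes>\<^sub>M M2) (\<lambda>x. f (fst x) * g (snd x))"
  proof (rule Fubini_integrable)
    show "(\<lambda>x. f (fst x) * g (snd x)) \<in> borel_measurable (M1 \<Otimes>\<^sub>M M2)"
      using f g by (intro borel_measurable_times measurable_compose[OF measurable_fst]
          measurable_compose[OF measurable_snd] borel_measurable_integrable)
    show "integrable M1 (\<lambda>x. \<integral>y. norm (f (fst (x, y)) * g (snd (x, y))) \<partial>M2)"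
      using f by (simp add: norm_mult)
    show "AE x in M1. integrable M2 (\<lambda>y. f (fst (x, y)) * g (snd (x, y)))"
      using g by simp
  qed
  show "(\<integral>x. f (fst x) * g (snd x) \<partial>(M1 \<Otimes>\<^sub>M M2)) = integral\<^sup>L M1 f * integral\<^sup>L M2 g"
    using integral_fst'[OF int] by simp
qed

lemma measurable_PiM_measure_pmf_finite:
  fixes f :: "('i \<Rightarrow> 'a::countable) \<Rightarrow> 'b::topological_space"
  assumes "finite I"
  shows "f \<in> borel_measurable (PiM I (\<lambda>i. measure_pmf (p i)))"
proof -
  have sets_eq: "sets (PiM I (\<lambda>i. measure_pmf (p i))) = sets (count_space (PiE I (\<lambda>_. UNIV)))"
    unfolding count_space_PiM_finite[OF assms countableI_type, symmetric]
    by (intro sets_PiM_cong) auto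
  show ?thesis
    unfolding measurable_cong_sets[OF sets_eq refl] by simp
qed

lemma integrable_PiM_measure_pmf_finite:
  fixes f :: "('i \<Rightarrow> 'a::finite) \<Rightarrow> 'b::{banach, second_countable_topology}"
  assumes "finite I"
  shows "integrable (PiM I (\<lambda>i. measure_pmf (p i))) f"
proof -
  interpret prob_space "PiM I (\<lambda>i. measure_pmf (p i))"
    by (intro prob_space_PiM prob_space_measure_pmf)
  have "finite (PiE I (\<lambda>_. UNIV :: 'a set))"
    using assms by (intro finite_PiE) auto
  then have "norm (f b) \<le> (\<Sum>b'\<in>PiE I (\<lambda>_. UNIV). norm (f b'))" if "b \<in> PiE I (\<lambda>_. UNIV)" for b
    using that by (intro member_le_sum) auto
  then show ?thesis
    using assms by (intro integrable_const_bound[where B="\<Sum>b'\<in>PiE I (\<lambda>_. UNIV). norm (f b')"] AE_I2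
        measurable_PiM_measure_pmf_finite) (auto simp: space_PiM)
qed

lemma prob_space_channel_space: "prob_space (channel_space L p)"
proof -
  interpret blockage: prob_space "PiM {..<L} (\<lambda>_. measure_pmf (bernoulli_pmf (1 - p)))"
    by (intro prob_space_PiM prob_space_measure_pmf)
  interpret phases: prob_space "PiM {..<L} (\<lambda>_. phase_measure)"
    by (intro prob_space_PiM prob_space_phase_measure)
  interpret pair_prob_space "PiM {..<L} (\<lambda>_. measure_pmf (bernoulli_pmf (1 - p)))"
      "PiM {..<L} (\<lambda>_. phase_measure)" ..
  show ?thesis
    unfolding channel_space_def by (rule P.prob_space_axioms)
qed

lemma space_channel_space:
  "space (channel_space L p) = PiE {..<L} (\<lambda>_. UNIV) \<times> PiE {..<L} (\<lambda>_. UNIV)"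
  unfolding channel_space_def by (simp add: space_pair_measure space_PiM)

lemma
  fixes G :: "(nat \<Rightarrow> bool) \<Rightarrow> 'a::{real_normed_field, banach, second_countable_topology}"
    and g :: "(nat \<Rightarrow> real) \<Rightarrow> 'a"
  assumes "integrable (PiM {..<L} (\<lambda>_. phase_measure)) g"
  shows integrable_channel_space_mult:
      "integrable (channel_space L p) (\<lambda>\<omega>. G (fst \<omega>) * g (snd \<omega>))"
    and integral_channel_space_mult:
      "(\<integral>\<omega>. G (fst \<omega>) * g (snd \<omega>) \<partial>channel_space L p)
        = (\<integral>b. G b \<partial>PiM {..<L} (\<lambda>_. measure_pmf (bernoulli_pmf (1 - p))))
          * (\<integral>\<theta>. g \<theta> \<partial>PiM {..<L} (\<lambda>_. phase_measure))"
proof -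
  interpret blockage: prob_space "PiM {..<L} (\<lambda>_. measure_pmf (bernoulli_pmf (1 - p)))"
    by (intro prob_space_PiM prob_space_measure_pmf)
  interpret phases: prob_space "PiM {..<L} (\<lambda>_. phase_measure)"
    by (intro prob_space_PiM prob_space_phase_measure)
  interpret pair_sigma_finite "PiM {..<L} (\<lambda>_. measure_pmf (bernoulli_pmf (1 - p)))"
      "PiM {..<L} (\<lambda>_. phase_measure)" ..
  have G: "integrable (PiM {..<L} (\<lambda>_. measure_pmf (bernoulli_pmf (1 - p)))) G"
    by (rule integrable_PiM_measure_pmf_finite) simp
  show "integrable (channel_space L p) (\<lambda>\<omega>. G (fst \<omega>) * g (snd \<omega>))"
    unfolding channel_space_def using G assms by (rule integrable_mult_fst_snd)
  show "(\<integral>\<omega>. G (fst \<omega>) * g (snd \<omega>) \<partial>channel_space L p)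
        = (\<integral>b. G b \<partial>PiM {..<L} (\<lambda>_. measure_pmf (bernoulli_pmf (1 - p))))
          * (\<integral>\<theta>. g \<theta> \<partial>PiM {..<L} (\<lambda>_. phase_measure))"
    unfolding channel_space_def using G assms by (rule integral_mult_fst_snd)
qed

lemma integrable_channel_space_fst: "integrable (channel_space L p) (\<lambda>\<omega>. G (fst \<omega>) :: real)"
proof -
  interpret phases: prob_space "PiM {..<L} (\<lambda>_. phase_measure)"
    by (intro prob_space_PiM prob_space_phase_measure)
  show ?thesis
    using integrable_channel_space_mult[where G=G and g="\<lambda>_. 1" and L=L and p=p] by simp
qed

lemma
  fixes G :: "nat \<Rightarrow> nat \<Rightarrow> (nat \<Rightarrow> bool) \<Rightarrow> complex"
  shows integrable_channel_space_cross_terms: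
      "integrable (channel_space L p)
        (\<lambda>\<omega>. \<Sum>i<L. \<Sum>k\<in>{..<L}-{i}. Re (G i k (fst \<omega>) * (cnj (cis (snd \<omega> i)) * cis (snd \<omega> k))))"
    and integral_channel_space_cross_terms:
      "(\<integral>\<omega>. (\<Sum>i<L. \<Sum>k\<in>{..<L}-{i}. Re (G i k (fst \<omega>) * (cnj (cis (snd \<omega> i)) * cis (snd \<omega> k))))
        \<partial>channel_space L p) = 0"
proof -
  let ?X = "\<lambda>\<omega>. \<Sum>i<L. \<Sum>k\<in>{..<L}-{i}. Re (G i k (fst \<omega>) * (cnj (cis (snd \<omega> i)) * cis (snd \<omega> k)))"
  let ?Z = "\<lambda>i k \<omega>. G i k (fst \<omega>) * (cnj (cis (snd \<omega> i)) * cis (snd \<omega> k))"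
  have "has_bochner_integral (channel_space L p) (?Z i k) 0"
    if "i < L" "k \<in> {..<L}-{i}" for i k
  proof -
    let ?g = "\<lambda>\<theta>. cnj (cis (\<theta> i)) * cis (\<theta> k)"
    have "integrable (PiM {..<L} (\<lambda>_. phase_measure)) ?g"
      and "integral\<^sup>L (PiM {..<L} (\<lambda>_. phase_measure)) ?g = 0"
      using that by (intro integrable_cnj_cis_mult_cis_PiM integral_cnj_cis_mult_cis_PiM; auto)+
    then show ?thesis
      using integrable_channel_space_mult[where G="G i k" and g="?g"]
        integral_channel_space_mult[where G="G i k" and g="?g"]
      by (simp add: has_bochner_integral_iff)
  qed
  then have "has_bochner_integral (channel_space L p)
      (\<lambda>\<omega>. \<Sum>i<L. \<Sum>k\<in>{..<L}-{i}. Re (?Z i k \<omega>)) (\<Sum>i<L. \<Sum>k\<in>{..<L}-{i}. Re 0)"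
    by (intro has_bochner_integral_sum has_bochner_integral_Re) auto
  then have X: "has_bochner_integral (channel_space L p) ?X 0"
    by (simp only: zero_complex.sel sum.neutral_const)
  then show "integrable (channel_space L p) ?X" and "integral\<^sup>L (channel_space L p) ?X = 0"
    unfolding has_bochner_integral_iff by blast+
qed

lemma log_le_tangent:
  fixes c x y :: real
  assumes "1 < c" "0 < x" "0 < y"
  shows "log c y \<le> log c x + (y - x) / (x * ln c)"
proof -
  have "ln y - ln x = ln (y / x)"
    using assms by (simp add: ln_div)
  also have "\<dots> \<le> y / x - 1"
    using assms by (intro ln_le_minus_one) simp
  also have "\<dots> = (y - x) / x"
    using assms by (simp add: field_simps)
  finally have "ln y \<le> ln x + (y - x) / x" by simp
  then have "ln y / ln c \<le> (ln x + (y - x) / x) / ln c"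
    using assms by (intro divide_right_mono) auto
  then show ?thesis
    by (simp add: log_def add_divide_distrib)
qed

lemma quad_form_split_diagonal:
  "quad_form L A v = (\<Sum>i<L. cnj (v i) * A i i * v i) + (\<Sum>i<L. \<Sum>k\<in>{..<L}-{i}. cnj (v i) * A i k * v k)"
  unfolding quad_form_def by (simp add: sum.remove[of "{..<L}"] sum.distrib)

lemma cnj_chan_h_mult_chan_h:
  "cnj (chan_h b \<theta> i) * z * chan_h b \<theta> k = of_bool (b i \<and> b k) * z * (cnj (cis (\<theta> i)) * cis (\<theta> k))"
  by (simp add: chan_h_def)

lemma quad_form_chan_h:
  "quad_form L A (chan_h b \<theta>) = (\<Sum>i<L. of_bool (b i) * A i i)
     + (\<Sum>i<L. \<Sum>k\<in>{..<L}-{i}. of_bool (b i \<and> b k) * A i k * (cnj (cis (\<theta> i)) * cis (\<theta> k)))"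
  by (simp add: quad_form_split_diagonal cnj_chan_h_mult_chan_h cis_cnj cis_mult)

lemma sum_of_bool_mult_lessThan:
  fixes L :: nat and x :: "'a::semiring_1"
  shows "(\<Sum>i<L. of_bool (b i) * x) = of_nat (card {l. l < L \<and> b l}) * x"
proof -
  have "{l. l < L \<and> b l} = {..<L} \<inter> {l. b l}"
    by auto
  then show ?thesis
    by simp
qed

lemma Re_diagonal_le_card:
  fixes L :: nat
  assumes "\<And>l. l < L \<Longrightarrow> Re (A l l) \<le> P"
  shows "Re (\<Sum>i<L. of_bool (b i) * A i i) \<le> real (card {l. l < L \<and> b l}) * P"
proof -
  have "Re (\<Sum>i<L. of_bool (b i) * A i i) \<le> (\<Sum>i<L. of_bool (b i) * P)"
    unfolding Re_sum using assms by (intro sum_mono) auto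
  then show ?thesis
    by (simp only: sum_of_bool_mult_lessThan)
qed

lemma log_one_plus_quad_form_chan_h_le:
  fixes c P :: real and L :: nat and b :: "nat \<Rightarrow> bool" and A :: "nat \<Rightarrow> nat \<Rightarrow> complex"
  assumes c: "1 < c" and P: "0 \<le> P" and A: "psd_mat L A" and diag: "\<And>l. l < L \<Longrightarrow> Re (A l l) \<le> P"
  defines "a \<equiv> real (card {l. l < L \<and> b l}) * P"
  shows "log c (1 + Re (quad_form L A (chan_h b \<theta>)))
    \<le> log c (1 + a) + (\<Sum>i<L. \<Sum>k\<in>{..<L}-{i}.
        Re (of_bool (b i \<and> b k) * A i k / of_real ((1 + a) * ln c) * (cnj (cis (\<theta> i)) * cis (\<theta> k))))"
proof -
  let ?q = "Re (quad_form L A (chan_h b \<theta>))"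
  let ?D = "Re (\<Sum>i<L. of_bool (b i) * A i i)"
  let ?O = "Re (\<Sum>i<L. \<Sum>k\<in>{..<L}-{i}. of_bool (b i \<and> b k) * A i k * (cnj (cis (\<theta> i)) * cis (\<theta> k)))"
  have q: "?q = ?D + ?O"
    by (simp only: quad_form_chan_h plus_complex.sel)
  have "0 \<le> ?q"
    using A by (simp add: psd_mat_def)
  moreover have "0 \<le> a"
    using P by (simp add: a_def)
  ultimately have "log c (1 + ?q) \<le> log c (1 + a) + (?q - a) / ((1 + a) * ln c)"
    using log_le_tangent[OF c, of "1 + a" "1 + ?q"] by simp
  also have "(?q - a) / ((1 + a) * ln c) \<le> ?O / ((1 + a) * ln c)"
    using q Re_diagonal_le_card[where A=A and P=P and b=b, OF diag] c \<open>0 \<le> a\<close>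
    by (intro divide_right_mono) (auto simp: a_def)
  also have "?O / ((1 + a) * ln c) = (\<Sum>i<L. \<Sum>k\<in>{..<L}-{i}.
        Re (of_bool (b i \<and> b k) * A i k / of_real ((1 + a) * ln c) * (cnj (cis (\<theta> i)) * cis (\<theta> k))))"
    by (simp add: Re_sum sum_divide_distrib Re_divide_of_real mult_ac)
  finally show ?thesis by simp
qed

lemma admissible_expected_rate_le:
  fixes c P :: real
  assumes c: "1 < c" and P: "0 \<le> P" and Q: "Q \<in> admissible_Q L P"
  shows "(\<integral>\<omega>. log c (1 + Re (quad_form L (Q (fst \<omega>)) (chan_h (fst \<omega>) (snd \<omega>)))) \<partial>channel_space L p)
    \<le> (\<integral>\<omega>. log c (1 + real (card {l. l < L \<and> fst \<omega> l}) * P) \<partial>channel_space L p)"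
    (is "integral\<^sup>L _ ?rate \<le> integral\<^sup>L _ ?cap")
proof -
  interpret prob_space "channel_space L p"
    by (rule prob_space_channel_space)
  have cap_nonneg: "0 \<le> integral\<^sup>L (channel_space L p) ?cap"
  proof (intro Bochner_Integration.integral_nonneg)
    fix \<omega> :: "(nat \<Rightarrow> bool) \<times> (nat \<Rightarrow> real)"
    have "0 < 1 + real (card {l. l < L \<and> fst \<omega> l}) * P"
      using P by (simp add: add_pos_nonneg)
    then show "0 \<le> ?cap \<omega>"
      using c P by simp
  qed
  show ?thesis
  proof (cases "integrable (channel_space L p) ?rate")
    case False
    then show ?thesis
      using cap_nonneg by (simp add: not_integrable_integral_eq)
  next
    case True
    define G where "G i k b = of_bool (b i \<and> b k) * Q b i k
      / of_real ((1 + real (card {l. l < L \<and> b l}) * P) * ln c)" for i k b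
    let ?X = "\<lambda>\<omega>. \<Sum>i<L. \<Sum>k\<in>{..<L}-{i}. Re (G i k (fst \<omega>) * (cnj (cis (snd \<omega> i)) * cis (snd \<omega> k)))"
    have cap_int: "integrable (channel_space L p) ?cap"
      by (rule integrable_channel_space_fst)
    have "integral\<^sup>L (channel_space L p) ?rate \<le> (\<integral>\<omega>. ?cap \<omega> + ?X \<omega> \<partial>channel_space L p)"
    proof (intro integral_mono True Bochner_Integration.integrable_add cap_int
        integrable_channel_space_cross_terms)
      fix \<omega> assume "\<omega> \<in> space (channel_space L p)"
      then have "fst \<omega> \<in> PiE {..<L} (\<lambda>_. UNIV)"
        by (auto simp: space_channel_space mem_Times_iff)
      then have "psd_mat L (Q (fst \<omega>))" "\<And>l. l < L \<Longrightarrow> Re (Q (fst \<omega>) l l) \<le> P"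
        using Q unfolding admissible_Q_def by blast+
      from log_one_plus_quad_form_chan_h_le[OF c P this]
      show "?rate \<omega> \<le> ?cap \<omega> + ?X \<omega>"
        by (simp add: G_def)
    qed
    also have "\<dots> = integral\<^sup>L (channel_space L p) ?cap"
      using cap_int integrable_channel_space_cross_terms integral_channel_space_cross_terms
      by (simp only: Bochner_Integration.integral_add add_0_right)
    finally show ?thesis .
  qed
qed

definition scalar_mat :: "'a::zero \<Rightarrow> nat \<Rightarrow> nat \<Rightarrow> 'a" where
  "scalar_mat a i k = (if i = k then a else 0)"

lemma quad_form_scalar_mat: "quad_form L (scalar_mat a) v = (\<Sum>i<L. cnj (v i) * a * v i)"
  by (simp add: quad_form_split_diagonal scalar_mat_def)

lemma scalar_mat_in_admissible_Q:
  assumes "0 \<le> P"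
  shows "(\<lambda>_. scalar_mat (complex_of_real P)) \<in> admissible_Q L P"
proof -
  have "0 \<le> Re (quad_form L (scalar_mat (complex_of_real P)) v)" for v
    using assms by (simp add: quad_form_scalar_mat Re_sum mult_ac sum_nonneg)
  then show ?thesis
    by (auto simp: admissible_Q_def psd_mat_def hermitian_mat_def scalar_mat_def)
qed

lemma Re_quad_form_scalar_mat_chan_h:
  "Re (quad_form L (scalar_mat (complex_of_real P)) (chan_h b \<theta>)) = real (card {l. l < L \<and> b l}) * P"
  by (simp add: quad_form_chan_h scalar_mat_def sum_of_bool_mult_lessThan)

theorem proposition1:
  fixes L :: nat and P pB c :: real
  assumes "L \<ge> 1" and "P \<ge> 0" and "0 \<le> pB" and "pB \<le> 1" and "c > 1"
  shows "(SUP Q \<in> admissible_Q L P.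
            \<integral>\<omega>. log c (1 + Re (quad_form L (Q (fst \<omega>)) (chan_h (fst \<omega>) (snd \<omega>))))
              \<partial>channel_space L pB)
         = (\<integral>\<omega>. log c (1 + real (card {l. l < L \<and> fst \<omega> l}) * P) \<partial>channel_space L pB)"
proof (rule cSup_eq_maximum)
  let ?rate = "\<lambda>Q. \<integral>\<omega>. log c (1 + Re (quad_form L (Q (fst \<omega>)) (chan_h (fst \<omega>) (snd \<omega>))))
    \<partial>channel_space L pB"
  have "?rate (\<lambda>_. scalar_mat (complex_of_real P))
      = (\<integral>\<omega>. log c (1 + real (card {l. l < L \<and> fst \<omega> l}) * P) \<partial>channel_space L pB)"
    by (simp only: Re_quad_form_scalar_mat_chan_h)
  then show "(\<integral>\<omega>. log c (1 + real (card {l. l < L \<and> fst \<omega> l}) * P) \<partial>channel_space L pB)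
      \<in> ?rate ` admissible_Q L P"
    using scalar_mat_in_admissible_Q[OF \<open>P \<ge> 0\<close>] by (rule image_eqI[OF sym])
  show "x \<le> (\<integral>\<omega>. log c (1 + real (card {l. l < L \<and> fst \<omega> l}) * P) \<partial>channel_space L pB)"
    if "x \<in> ?rate ` admissible_Q L P" for x
    using that admissible_expected_rate_le[OF \<open>c > 1\<close> \<open>P \<ge> 0\<close>] by blast
qed

end
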